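(* Let $0\le x_1<\dots<x_n\le1$, let $r\in\{1,\dots,n-1\}$, and let $R:[0,1]\to\mathbb R$ be smooth and nonvanishing. Then: (a) $\tilde{\mathcal C}_{r,R}=\mathcal C_{r,R}$. (b) If $\mathbf f=(F(x_1),\dots,F(x_n))'$ where $F$ is such that $RF$ is $r$ times differentiable, then for each $\mathbf i=(i_1,\dots,i_{r+1})\in\mathcal I_r$ there exists $c_{\mathbf i}\in]x_{i_1},x_{i_{r+1}}[$ such that $$\phi_{\mathbf i}(R\star\mathbf f)=\frac{\Lambda(F)(c_{\mathbf i})}{r!}\,\phi_{\mathbf i}(\mathbf x^r).$$ (c) For every $J\subset\{1,\dots,n\}$ with at least $r+1$ elements and every $\mathbf f\in\mathbb R^n$, $$-\langle\mathbf f,\mathbf t_J^*\rangle=N_J^{-1}\sum_{\mathbf i\in\mathcal I_r\cap J^{r+1}}\phi_{\mathbf i}(R\star\mathbf f)\,\phi_{\mathbf i}(\mathbf x^r),$$ where $N_J=\mathrm{Gram}(\mathbf 1_J,\mathbf x_J,\dots,\mathbf x_J^{r-1})\,\gamma_J$.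
   Context: $\mathbf x=(x_1,\dots,x_n)'$; for $\mathbf w\in\mathbb R^n$, $(R\star\mathbf w)_i=R(x_i)w_i$, $\mathbf w^k$ is the coordinatewise $k$-th power ($\mathbf w^0=\mathbf 1$), $\mathbf w_J$ agrees with $\mathbf w$ on $J$ and is $0$ elsewhere, $\mathbf 1_J$ is the indicator of $J$. $\mathcal I_r=\{(i_1,\dots,i_{r+1}):\ 1\le i_1<\dots<i_{r+1}\le n\}$ and, for $\mathbf i\in\mathcal I_r$, $\phi_{\mathbf i}(\mathbf v)$ is the determinant of the $(r+1)\times(r+1)$ matrix whose $m$-th row is $(1,x_{i_m},\dots,x_{i_m}^{r-1},v_{i_m})$. For $i\in\{1,\dots,n-r\}$, $\phi_{i,r}=\phi_{(i,i+1,\dots,i+r)}$. $\tilde{\mathcal C}_{r,R}=\{\mathbf f\in\mathbb R^n:\ \phi_{\mathbf i}(R\star\mathbf f)\ge0\ \forall\mathbf i\in\mathcal I_r\}$ and $\mathcal C_{r,R}=\{\mathbf f\in\mathbb R^n:\ \phi_{i,r}(R\star\mathbf f)\ge0\ \forall i\in\{1,\dots,n-r\}\}$. $\Lambda(F)(x)=\frac{d^r}{dx^r}[R(x)F(x)]$. $\mathrm{Gram}(\mathbf w^1,\dots,\mathbf w^q)=\det(\langle\mathbf w^i,\mathbf w^j\rangle)_{1\le i,j\le q}$. $\mathcal X_J=\mathrm{span}\{\mathbf 1_J,\mathbf x_J,\dots,\mathbf x_J^{r-1}\}$, $\Pi_{\mathcal X_J}$ the orthogonal projection onto it, $\gamma_J=\|R\star(\mathbf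 x_J^r-\Pi_{\mathcal X_J}\mathbf x_J^r)\|$ and $\mathbf t_J^*=-R\star(\mathbf x_J^r-\Pi_{\mathcal X_J}\mathbf x_J^r)/\gamma_J$. *)

theory Defs
  imports "HOL-Analysis.Analysis"
begin

text \<open>Vectors of R^n are represented as functions nat => real, with coordinates
  indexed by 1..n (values outside 1..n are irrelevant / zero).\<close>

definition vecs :: "nat \<Rightarrow> (nat \<Rightarrow> real) set" where
  "vecs n = {f. \<forall>i. i \<notin> {1..n} \<longrightarrow> f i = 0}"

definition inner_n :: "nat \<Rightarrow> (nat \<Rightarrow> real) \<Rightarrow> (nat \<Rightarrow> real) \<Rightarrow> real" where
  "inner_n n u v = (\<Sum>i=1..n. u i * v i)"

definition norm_n :: "nat \<Rightarrow> (nat \<Rightarrow> real) \<Rightarrow> real" where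
  "norm_n n u = sqrt (inner_n n u u)"

definition detn :: "nat \<Rightarrow> (nat \<Rightarrow> nat \<Rightarrow> real) \<Rightarrow> real" where
  "detn m A = (\<Sum>p | p permutes {0..<m}. of_int (sign p) * (\<Prod>i<m. A i (p i)))"

definition star :: "(real \<Rightarrow> real) \<Rightarrow> (nat \<Rightarrow> real) \<Rightarrow> (nat \<Rightarrow> real) \<Rightarrow> (nat \<Rightarrow> real)" where
  "star R x w = (\<lambda>i. R (x i) * w i)"

definition Ir :: "nat \<Rightarrow> nat \<Rightarrow> nat list set" where
  "Ir n r = {is. length is = Suc r \<and> sorted_wrt (<) is \<and> set is \<subseteq> {1..n}}"

definition phi :: "(nat \<Rightarrow> real) \<Rightarrow> nat \<Rightarrow> nat list \<Rightarrow> (nat \<Rightarrow> real) \<Rightarrow> real" where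
  "phi x r is v = detn (Suc r) (\<lambda>m k. if k < r then x (is ! m) ^ k else v (is ! m))"

definition phi_cons :: "(nat \<Rightarrow> real) \<Rightarrow> nat \<Rightarrow> nat \<Rightarrow> (nat \<Rightarrow> real) \<Rightarrow> real" where
  "phi_cons x r i v = phi x r [i..<i + Suc r] v"

definition Ctilde :: "nat \<Rightarrow> (nat \<Rightarrow> real) \<Rightarrow> nat \<Rightarrow> (real \<Rightarrow> real) \<Rightarrow> (nat \<Rightarrow> real) set" where
  "Ctilde n x r R = {f \<in> vecs n. \<forall>is \<in> Ir n r. phi x r is (star R x f) \<ge> 0}"

definition Ccons :: "nat \<Rightarrow> (nat \<Rightarrow> real) \<Rightarrow> nat \<Rightarrow> (real \<Rightarrow> real) \<Rightarrow> (nat \<Rightarrow> real) set" where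
  "Ccons n x r R = {f \<in> vecs n. \<forall>i \<in> {1..n-r}. phi_cons x r i (star R x f) \<ge> 0}"

definition vpow :: "(nat \<Rightarrow> real) \<Rightarrow> nat \<Rightarrow> (nat \<Rightarrow> real)" where
  "vpow x k = (\<lambda>i. x i ^ k)"

definition restr :: "nat set \<Rightarrow> (nat \<Rightarrow> real) \<Rightarrow> (nat \<Rightarrow> real)" where
  "restr J w = (\<lambda>i. if i \<in> J then w i else 0)"

definition XJ :: "(nat \<Rightarrow> real) \<Rightarrow> nat \<Rightarrow> nat set \<Rightarrow> (nat \<Rightarrow> real) set" where
  "XJ x r J = {v. \<exists>a. v = (\<lambda>i. \<Sum>k<r. a k * restr J (vpow x k) i)}"

definition proj_n :: "nat \<Rightarrow> (nat \<Rightarrow> real) set \<Rightarrow> (nat \<Rightarrow> real) \<Rightarrow> (nat \<Rightarrow> real)" where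
  "proj_n n S u = (THE p. p \<in> S \<and> (\<forall>v \<in> S. inner_n n (\<lambda>i. u i - p i) v = 0))"

definition residJ :: "nat \<Rightarrow> (nat \<Rightarrow> real) \<Rightarrow> nat \<Rightarrow> (real \<Rightarrow> real) \<Rightarrow> nat set \<Rightarrow> (nat \<Rightarrow> real)" where
  "residJ n x r R J = star R x (\<lambda>i. restr J (vpow x r) i - proj_n n (XJ x r J) (restr J (vpow x r)) i)"

definition gammaJ :: "nat \<Rightarrow> (nat \<Rightarrow> real) \<Rightarrow> nat \<Rightarrow> (real \<Rightarrow> real) \<Rightarrow> nat set \<Rightarrow> real" where
  "gammaJ n x r R J = norm_n n (residJ n x r R J)"

definition tJ :: "nat \<Rightarrow> (nat \<Rightarrow> real) \<Rightarrow> nat \<Rightarrow> (real \<Rightarrow> real) \<Rightarrow> nat set \<Rightarrow> (nat \<Rightarrow> real)" where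
  "tJ n x r R J = (\<lambda>i. - residJ n x r R J i / gammaJ n x r R J)"

definition gram :: "nat \<Rightarrow> nat \<Rightarrow> (nat \<Rightarrow> nat \<Rightarrow> real) \<Rightarrow> real" where
  "gram n q w = detn q (\<lambda>i j. inner_n n (w i) (w j))"

definition NJ :: "nat \<Rightarrow> (nat \<Rightarrow> real) \<Rightarrow> nat \<Rightarrow> (real \<Rightarrow> real) \<Rightarrow> nat set \<Rightarrow> real" where
  "NJ n x r R J = gram n r (\<lambda>k. restr J (vpow x k)) * gammaJ n x r R J"

text \<open>Smoothness (C^infinity) on [0,1]: a sequence of successive one-sided-at-the-ends derivatives.\<close>
definition smooth01 :: "(real \<Rightarrow> real) \<Rightarrow> bool" where
  "smooth01 R = (\<exists>D. D 0 = R \<and>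
     (\<forall>k. \<forall>t\<in>{0..1}. (D k has_real_derivative D (Suc k) t) (at t within {0..1})))"

end

theory Submission
  imports Defs "Jordan_Normal_Form.Determinant"
begin

(* For nodes x_i_1 < ... < x_i_(r+1), the ratio phi_i(v) / phi_i(x^r) is the divided difference of
   order r of v: the leading coefficient of the polynomial of degree at most r interpolating v at
   these nodes, phi_i(x^r) being a positive Vandermonde determinant.

   (a) By Neville's recurrence, the divided difference on a node set with a gap is a convex
   combination of the divided differences obtained by dropping either extreme node instead of
   filling the gap; induction on the spread of the node set reduces everything to consecutive nodes.

   (b) R F minus its interpolating polynomial vanishes at the r+1 nodes, so by repeated Rolle its
   r-th derivative vanishes at some c between the extreme nodes, where the interpolant contributes
   r! times its leading coefficient.

   (c) Let d be the residual x_J^r - Pi x_J^r, orthogonal to 1, x, ..., x^(r-1) on J. Then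
   phi_i(x^r) = phi_i(d) for i inside J, and by Cauchy-Binet the sum of phi_i(R f) phi_i(d) is the
   determinant of the Gram matrix bordered by <R f, d>; orthogonality makes it Gram * <R f, d>,
   while -<f, t_J*> = <R f, d> / gamma_J. *)

section \<open>Determinants\<close>

definition square_mat :: "nat \<Rightarrow> (nat \<Rightarrow> nat \<Rightarrow> real) \<Rightarrow> real mat" where
  "square_mat m A = Matrix.mat m m (\<lambda>(i, j). A i j)"

lemma square_mat_carrier [simp]: "square_mat m A \<in> carrier_mat m m"
  by (simp add: square_mat_def)

lemma square_mat_index [simp]: "i < m \<Longrightarrow> j < m \<Longrightarrow> square_mat m A $$ (i, j) = A i j"
  by (simp add: square_mat_def)

lemma square_mat_dim [simp]: "dim_row (square_mat m A) = m" "dim_col (square_mat m A) = m"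
  by (simp_all add: square_mat_def)

lemma detn_eq_det: "detn m A = det (square_mat m A)"
proof -
  have "detn m A = (\<Sum>p\<in>{p. p permutes {0..<m}}. signof p * (\<Prod>i = 0..<m. square_mat m A $$ (i, p i)))"
    unfolding detn_def
  proof (rule sum.cong)
    fix p assume "p \<in> {p. p permutes {0..<m}}"
    then have p: "p permutes {0..<m}" by simp
    have "(\<Prod>i<m. A i (p i)) = (\<Prod>i = 0..<m. square_mat m A $$ (i, p i))"
      using permutes_in_image[OF p] by (auto simp: atLeast0LessThan intro!: prod.cong)
    then show "of_int (sign p) * (\<Prod>i<m. A i (p i)) = signof p * (\<Prod>i = 0..<m. square_mat m A $$ (i, p i))"
      by simp
  qed (auto simp: atLeast0LessThan)
  also have "\<dots> = det (square_mat m A)"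
    by (rule det_def'[symmetric]) simp
  finally show ?thesis .
qed

lemma detn_cong:
  "(\<And>i k. i < m \<Longrightarrow> k < m \<Longrightarrow> A i k = B i k) \<Longrightarrow> detn m A = detn m B"
  unfolding detn_eq_det square_mat_def by (rule arg_cong[where f = det]) (auto intro!: eq_matI)

lemma detn_identical_rows:
  assumes "i < m" "j < m" "i \<noteq> j" "\<And>k. k < m \<Longrightarrow> A i k = A j k"
  shows "detn m A = 0"
  unfolding detn_eq_det
  by (rule det_identical_rows[OF square_mat_carrier assms(3,1,2)])
    (auto intro!: eq_vecI simp: assms(1,2,4))

lemma detn_identical_columns:
  assumes "i < m" "j < m" "i \<noteq> j" "\<And>k. k < m \<Longrightarrow> A k i = A k j"
  shows "detn m A = 0"
  unfolding detn_eq_det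
  by (rule det_identical_columns[OF square_mat_carrier assms(3,1,2)])
    (auto intro!: eq_vecI simp: assms(1,2,4))

lemma detn_transpose: "detn m (\<lambda>i k. A k i) = detn m A"
proof -
  have "square_mat m (\<lambda>i k. A k i) = transpose_mat (square_mat m A)"
    by (auto intro!: eq_matI)
  then show ?thesis
    unfolding detn_eq_det using det_transpose[OF square_mat_carrier] by simp
qed

lemma detn_permute_rows:
  assumes p: "p permutes {0..<m}"
  shows "detn m (\<lambda>i k. A (p i) k) = of_int (sign p) * detn m A"
proof -
  have "square_mat m (\<lambda>i k. A (p i) k) = Matrix.mat m m (\<lambda>(i, j). square_mat m A $$ (p i, j))"
  proof (rule eq_matI)
    fix i j assume "i < dim_row (Matrix.mat m m (\<lambda>(i, j). square_mat m A $$ (p i, j)))"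
      "j < dim_col (Matrix.mat m m (\<lambda>(i, j). square_mat m A $$ (p i, j)))"
    moreover then have "p i < m" using permutes_in_image[OF p] by auto
    ultimately show "square_mat m (\<lambda>i k. A (p i) k) $$ (i, j)
        = Matrix.mat m m (\<lambda>(i, j). square_mat m A $$ (p i, j)) $$ (i, j)"
      by simp
  qed auto
  then show ?thesis
    unfolding detn_eq_det using det_permute_rows[OF square_mat_carrier p] by simp
qed

lemma detn_scale_rows: "detn m (\<lambda>i k. c i * A i k) = (\<Prod>i<m. c i) * detn m A"
  unfolding detn_def by (simp add: prod.distrib sum_distrib_left mult.assoc mult.left_commute)

lemma detn_column_expansion:
  assumes "c < m"
  shows "detn m A = (\<Sum>i<m. A i c * cofactor (square_mat m A) i c)"
  unfolding detn_eq_det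
  using laplace_expansion_column[OF square_mat_carrier assms] assms by simp

lemma cofactor_square_mat_cong:
  assumes "c < m" "\<And>a b. a < m \<Longrightarrow> b < m \<Longrightarrow> b \<noteq> c \<Longrightarrow> A a b = B a b"
  shows "cofactor (square_mat m A) i c = cofactor (square_mat m B) i c"
proof -
  have "mat_delete (square_mat m A) i c = mat_delete (square_mat m B) i c"
    using assms by (auto intro!: eq_matI simp: mat_delete_def)
  then show ?thesis by (simp add: cofactor_def)
qed

lemma detn_linear_column:
  assumes c: "c < m"
  shows "detn m (\<lambda>i k. if k = c then a * u i + v i else A i k)
       = a * detn m (\<lambda>i k. if k = c then u i else A i k) + detn m (\<lambda>i k. if k = c then v i else A i k)"
proof -
  let ?C = "\<lambda>i. cofactor (square_mat m (\<lambda>i k. if k = c then u i else A i k)) i c"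
  have "cofactor (square_mat m (\<lambda>i k. if k = c then a * u i + v i else A i k)) i c = ?C i"
    and "cofactor (square_mat m (\<lambda>i k. if k = c then v i else A i k)) i c = ?C i" for i
    by (rule cofactor_square_mat_cong, use c in auto)+
  then show ?thesis
    by (subst (1 2 3) detn_column_expansion[OF c])
      (simp add: sum_distrib_left distrib_right sum.distrib mult.assoc)
qed

lemma detn_Suc_last_column:
  assumes "\<And>i. i < m \<Longrightarrow> A i m = 0"
  shows "detn (Suc m) A = A m m * detn m A"
proof -
  have "detn (Suc m) A = (\<Sum>i<Suc m. A i m * cofactor (square_mat (Suc m) A) i m)"
    by (rule detn_column_expansion) simp
  also have "\<dots> = A m m * cofactor (square_mat (Suc m) A) m m"
    using assms by (simp add: sum.neutral)
  also have "mat_delete (square_mat (Suc m) A) m m = square_mat m A"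
    by (auto intro!: eq_matI simp: mat_delete_def)
  then have "cofactor (square_mat (Suc m) A) m m = detn m A"
    by (simp add: cofactor_def detn_eq_det)
  finally show ?thesis .
qed

lemma detn_Suc_first_column:
  assumes "\<And>i. 0 < i \<Longrightarrow> i < Suc m \<Longrightarrow> A i 0 = 0"
  shows "detn (Suc m) A = A 0 0 * detn m (\<lambda>i k. A (Suc i) (Suc k))"
proof -
  have "detn (Suc m) A = (\<Sum>i<Suc m. A i 0 * cofactor (square_mat (Suc m) A) i 0)"
    by (rule detn_column_expansion) simp
  also have "\<dots> = A 0 0 * cofactor (square_mat (Suc m) A) 0 0"
  proof -
    have "(\<Sum>i\<in>{1..<Suc m}. A i 0 * cofactor (square_mat (Suc m) A) i 0) = 0"
      by (rule sum.neutral) (simp add: assms)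
    moreover have "{..<Suc m} = insert 0 {1..<Suc m}" by auto
    ultimately show ?thesis by simp
  qed
  also have "mat_delete (square_mat (Suc m) A) 0 0 = square_mat m (\<lambda>i k. A (Suc i) (Suc k))"
    by (auto intro!: eq_matI simp: mat_delete_def)
  then have "cofactor (square_mat (Suc m) A) 0 0 = detn m (\<lambda>i k. A (Suc i) (Suc k))"
    by (simp add: cofactor_def detn_eq_det)
  finally show ?thesis .
qed

lemma detn_0 [simp]: "detn 0 A = 1"
  by (simp add: detn_def)

lemma detn_vandermonde_Suc:
  "detn (Suc m) (\<lambda>i k. y i ^ k) = (\<Prod>i<m. y (Suc i) - y 0) * detn m (\<lambda>i k. y (Suc i) ^ k)"
proof -
  \<comment> \<open>Column operations: subtract \<open>y 0\<close> times column \<open>k - 1\<close> from column \<open>k\<close>.\<close>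
  define U where "U = square_mat (Suc m) (\<lambda>l k. (if l = k then 1 else 0) + (if Suc l = k then - y 0 else 0))"
  define B where "B = (\<lambda>i k. if k = 0 then 1 else y i ^ (k - 1) * (y i - y 0))"
  have Uc: "U \<in> carrier_mat (Suc m) (Suc m)" by (simp add: U_def)
  have "upper_triangular U" unfolding upper_triangular_def U_def by auto
  then have detU: "det U = 1"
    by (subst det_upper_triangular[OF _ Uc]) (auto simp: prod_list_diag_prod U_def)
  have entry: "(\<Sum>l\<in>{0..<Suc m}. y i ^ l * ((if l = k then 1 else 0) + (if Suc l = k then - y 0 else 0)))
      = B i k" if "k < Suc m" for i k
  proof -
    have "(\<Sum>l\<in>{0..<Suc m}. y i ^ l * ((if l = k then 1 else 0) + (if Suc l = k then - y 0 else 0)))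
        = (\<Sum>l\<in>{0..<Suc m}. if l = k then y i ^ l else 0) + (\<Sum>l\<in>{0..<Suc m}. if Suc l = k then - y 0 * y i ^ l else 0)"
      by (subst sum.distrib[symmetric], rule sum.cong) auto
    also have "\<dots> = B i k"
      using that by (cases k) (auto simp: B_def sum.delta' algebra_simps less_Suc_eq)
    finally show ?thesis .
  qed
  have "square_mat (Suc m) (\<lambda>i k. y i ^ k) * U = square_mat (Suc m) B"
  proof (rule eq_matI)
    fix i k assume "i < dim_row (square_mat (Suc m) B)" "k < dim_col (square_mat (Suc m) B)"
    then show "(square_mat (Suc m) (\<lambda>i k. y i ^ k) * U) $$ (i, k) = square_mat (Suc m) B $$ (i, k)"
      using entry[of k i] by (simp add: U_def scalar_prod_def del: sum.atLeast0_lessThan_Suc)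
  qed (simp_all add: U_def)
  moreover have "det (square_mat (Suc m) (\<lambda>i k. y i ^ k) * U) = det (square_mat (Suc m) (\<lambda>i k. y i ^ k))"
    using det_mult[OF square_mat_carrier Uc] detU by simp
  ultimately have "detn (Suc m) (\<lambda>i k. y i ^ k) = detn (Suc m) B"
    unfolding detn_eq_det by simp
  also have "\<dots> = detn (Suc m) (\<lambda>i k. B k i)" by (rule detn_transpose[symmetric])
  also have "\<dots> = detn m (\<lambda>i k. B (Suc k) (Suc i))"
    by (subst detn_Suc_first_column) (simp_all add: B_def)
  also have "\<dots> = detn m (\<lambda>i k. (y (Suc i) - y 0) * y (Suc i) ^ k)"
    by (subst detn_transpose) (simp add: B_def mult.commute)
  finally show ?thesis by (simp add: detn_scale_rows)
qed

lemma detn_vandermonde_pos: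
  "(\<And>i j. i < j \<Longrightarrow> j < m \<Longrightarrow> y i < y j) \<Longrightarrow> 0 < detn m (\<lambda>i k. y i ^ k)"
proof (induction m arbitrary: y)
  case (Suc m)
  have "0 < detn m (\<lambda>i k. y (Suc i) ^ k)"
    by (rule Suc.IH) (use Suc.prems in auto)
  moreover have "0 < (\<Prod>i<m. y (Suc i) - y 0)"
    by (rule prod_pos) (use Suc.prems in auto)
  ultimately show ?case by (simp add: detn_vandermonde_Suc)
qed simp

lemma detn_linear_system_solvable:
  assumes "detn m G \<noteq> 0"
  obtains \<alpha> where "\<And>a. a < m \<Longrightarrow> (\<Sum>c<m. G a c * \<alpha> c) = b a"
proof -
  have G: "square_mat m G \<in> carrier_mat m m" by simp
  have "square_mat m G \<in> Units (ring_mat TYPE(real) m undefined)"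
    by (rule det_non_zero_imp_unit[OF G]) (use assms in \<open>simp add: detn_eq_det\<close>)
  then obtain B where B: "B \<in> carrier_mat m m" "square_mat m G * B = 1\<^sub>m m"
    unfolding Units_def ring_mat_def by auto
  define \<alpha> where "\<alpha> = B *\<^sub>v vec m b"
  have "square_mat m G *\<^sub>v \<alpha> = (square_mat m G * B) *\<^sub>v vec m b"
    unfolding \<alpha>_def by (rule assoc_mult_mat_vec[symmetric, OF G B(1)]) simp
  then have sol: "square_mat m G *\<^sub>v \<alpha> = vec m b" using B(2) by simp
  show ?thesis
  proof (rule that[of "\<lambda>c. \<alpha> $ c"])
    fix a assume "a < m"
    moreover have "dim_vec \<alpha> = m" unfolding \<alpha>_def using B(1) by simp
    ultimately show "(\<Sum>c<m. G a c * \<alpha> $ c) = b a"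
      using arg_cong[OF sol, of "\<lambda>v. v $ a"] by (simp add: scalar_prod_def atLeast0LessThan)
  qed
qed

section \<open>The Cauchy--Binet formula\<close>

lemma set_eq_image_permutes_nth:
  assumes "length xs = m" "s permutes {0..<m}"
  shows "set xs = (\<lambda>a. xs ! s a) ` {..<m}"
proof -
  have "s ` {..<m} = {..<m}" using permutes_image[OF assms(2)] by (simp add: atLeast0LessThan)
  then have "(\<lambda>a. xs ! s a) ` {..<m} = (!) xs ` {..<m}" by (metis image_image)
  then show ?thesis using assms(1) by (auto simp: set_conv_nth)
qed

lemma inj_on_compose_sorted_list_permutes:
  "inj_on (\<lambda>(xs, s). restrict (\<lambda>a. xs ! s a) {..<m})
     ({xs :: 'a :: linorder list. length xs = m \<and> sorted_wrt (<) xs} \<times> {s. s permutes {0..<m}})"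
proof (rule inj_onI)
  fix p q :: "'a list \<times> (nat \<Rightarrow> nat)"
  assume p: "p \<in> {xs. length xs = m \<and> sorted_wrt (<) xs} \<times> {s. s permutes {0..<m}}"
    and q: "q \<in> {xs. length xs = m \<and> sorted_wrt (<) xs} \<times> {s. s permutes {0..<m}}"
    and eq: "(\<lambda>(xs, s). restrict (\<lambda>a. xs ! s a) {..<m}) p = (\<lambda>(xs, s). restrict (\<lambda>a. xs ! s a) {..<m}) q"
  obtain xs s ys s' where pq: "p = (xs, s)" "q = (ys, s')" by (cases p, cases q)
  have xs: "length xs = m" "sorted_wrt (<) xs" and ys: "length ys = m" "sorted_wrt (<) ys"
    and s: "s permutes {0..<m}" and s': "s' permutes {0..<m}"
    using p q by (simp_all add: pq)
  have eqa: "xs ! s a = ys ! s' a" if "a < m" for a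
    using fun_cong[OF eq, of a] that by (simp add: pq)
  then have "set xs = set ys"
    using set_eq_image_permutes_nth[OF xs(1) s] set_eq_image_permutes_nth[OF ys(1) s'] by auto
  then have "xs = ys"
    using xs(2) ys(2) by (intro sorted_distinct_set_unique) (auto simp: strict_sorted_iff)
  moreover have "s a = s' a" for a
  proof (cases "a < m")
    case True
    have "s a < m" "s' a < m" using permutes_in_image[OF s] permutes_in_image[OF s'] True by auto
    moreover have "distinct xs" using xs(2) strict_sorted_iff by blast
    ultimately show ?thesis
      using eqa[OF True] \<open>xs = ys\<close> xs(1) by (simp add: nth_eq_iff_index_eq)
  qed (use permutes_not_in[OF s] permutes_not_in[OF s'] in simp)
  ultimately show "p = q" by (simp add: pq ext)
qed

lemma injective_eq_compose_sorted_list_permutes: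
  fixes J :: "'a :: linorder set"
  assumes f: "f \<in> {..<m} \<rightarrow>\<^sub>E J" "inj_on f {..<m}"
  obtains xs s where "length xs = m" "sorted_wrt (<) xs" "set xs \<subseteq> J" "s permutes {0..<m}"
    "f = restrict (\<lambda>a. xs ! s a) {..<m}"
proof -
  define xs where "xs = sorted_list_of_set (f ` {..<m})"
  have set_xs: "set xs = f ` {..<m}" and sorted_xs: "sorted_wrt (<) xs" and "distinct xs"
    unfolding xs_def by (simp_all add: strict_sorted_iff)
  have len_xs: "length xs = m" unfolding xs_def using f(2) by (simp add: card_image)
  have nth_bij: "bij_betw ((!) xs) {..<m} (f ` {..<m})"
    using bij_betw_nth[OF \<open>distinct xs\<close>] len_xs set_xs by simp
  define s where "s a = (if a < m then inv_into {..<m} ((!) xs) (f a) else a)" for a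
  have "bij_betw (inv_into {..<m} ((!) xs) \<circ> f) {..<m} {..<m}"
    using bij_betw_trans[OF inj_on_imp_bij_betw[OF f(2)] bij_betw_inv_into[OF nth_bij]] .
  moreover have "bij_betw s {..<m} {..<m} = bij_betw (inv_into {..<m} ((!) xs) \<circ> f) {..<m} {..<m}"
    by (rule bij_betw_cong) (simp add: s_def)
  ultimately have "s permutes {0..<m}"
    by (intro bij_imp_permutes) (simp_all add: s_def atLeast0LessThan)
  moreover have "f = restrict (\<lambda>a. xs ! s a) {..<m}"
  proof
    fix a show "f a = restrict (\<lambda>a. xs ! s a) {..<m} a"
      using f_inv_into_f[of "f a" "(!) xs" "{..<m}"] nth_bij PiE_arb[OF f(1)]
      by (auto simp: s_def bij_betw_def)
  qed
  moreover have "set xs \<subseteq> J" using f(1) set_xs by auto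
  ultimately show ?thesis using that len_xs sorted_xs by blast
qed

lemma bij_betw_compose_sorted_list_permutes:
  fixes J :: "'a :: linorder set" and m :: nat
  defines "h \<equiv> \<lambda>(xs, s). restrict (\<lambda>a. xs ! s a) {..<m}"
  shows "bij_betw h ({xs. length xs = m \<and> sorted_wrt (<) xs \<and> set xs \<subseteq> J} \<times> {s. s permutes {0..<m}})
     {f \<in> {..<m} \<rightarrow>\<^sub>E J. inj_on f {..<m}}"
proof (rule bij_betw_imageI)
  show "inj_on h ({xs. length xs = m \<and> sorted_wrt (<) xs \<and> set xs \<subseteq> J} \<times> {s. s permutes {0..<m}})"
    unfolding h_def by (rule inj_on_subset[OF inj_on_compose_sorted_list_permutes]) auto
  show "h ` ({xs. length xs = m \<and> sorted_wrt (<) xs \<and> set xs \<subseteq> J} \<times> {s. s permutes {0..<m}})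
      = {f \<in> {..<m} \<rightarrow>\<^sub>E J. inj_on f {..<m}}"
  proof (intro equalityI subsetI)
    fix f assume "f \<in> h ` ({xs. length xs = m \<and> sorted_wrt (<) xs \<and> set xs \<subseteq> J} \<times> {s. s permutes {0..<m}})"
    then obtain xs s where xs: "length xs = m" "sorted_wrt (<) xs" "set xs \<subseteq> J"
      and s: "s permutes {0..<m}" and f: "f = restrict (\<lambda>a. xs ! s a) {..<m}"
      by (auto simp: h_def)
    have s_lt: "s a < m" if "a < m" for a using permutes_in_image[OF s] that by simp
    have "inj_on f {..<m}"
    proof (rule inj_onI)
      fix a b assume ab: "a \<in> {..<m}" "b \<in> {..<m}" "f a = f b"
      have "distinct xs" using xs(2) strict_sorted_iff by blast
      then have "s a = s b" using ab s_lt xs(1) by (simp add: f nth_eq_iff_index_eq)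
      then show "a = b" using permutes_inj[OF s] by (simp add: inj_eq)
    qed
    moreover have "f \<in> {..<m} \<rightarrow>\<^sub>E J" using xs s_lt by (auto simp: f)
    ultimately show "f \<in> {f \<in> {..<m} \<rightarrow>\<^sub>E J. inj_on f {..<m}}" by simp
  next
    fix f assume "f \<in> {f \<in> {..<m} \<rightarrow>\<^sub>E J. inj_on f {..<m}}"
    then obtain xs s where "length xs = m" "sorted_wrt (<) xs" "set xs \<subseteq> J" "s permutes {0..<m}"
      "f = restrict (\<lambda>a. xs ! s a) {..<m}"
      using injective_eq_compose_sorted_list_permutes by blast
    then show "f \<in> h ` ({xs. length xs = m \<and> sorted_wrt (<) xs \<and> set xs \<subseteq> J} \<times> {s. s permutes {0..<m}})"
      unfolding h_def by (intro image_eqI[of _ _ "(xs, s)"]) auto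
  qed
qed

lemma detn_sum_rows_expand:
  assumes "finite J"
  shows "detn m (\<lambda>a b. \<Sum>j\<in>J. A j a * B j b)
    = (\<Sum>f\<in>{..<m} \<rightarrow>\<^sub>E J. (\<Prod>a<m. A (f a) a) * detn m (\<lambda>a b. B (f a) b))"
proof -
  have "detn m (\<lambda>a b. \<Sum>j\<in>J. A j a * B j b)
      = (\<Sum>p | p permutes {0..<m}. of_int (sign p) * (\<Sum>f\<in>{..<m} \<rightarrow>\<^sub>E J. \<Prod>a<m. A (f a) a * B (f a) (p a)))"
    unfolding detn_def by (rule sum.cong[OF refl], subst prod_sum_PiE) (auto simp: assms)
  also have "\<dots> = (\<Sum>f\<in>{..<m} \<rightarrow>\<^sub>E J. \<Sum>p | p permutes {0..<m}.
      (\<Prod>a<m. A (f a) a) * (of_int (sign p) * (\<Prod>a<m. B (f a) (p a))))"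
    by (subst sum.swap) (simp add: sum_distrib_left prod.distrib mult_ac)
  finally show ?thesis unfolding detn_def by (simp add: sum_distrib_left)
qed

lemma sum_permutes_detn_rows:
  "(\<Sum>s | s permutes {0..<m}. (\<Prod>a<m. A (xs ! s a) a) * detn m (\<lambda>a b. B (xs ! s a) b))
    = detn m (\<lambda>i a. A (xs ! i) a) * detn m (\<lambda>i b. B (xs ! i) b)"
proof -
  have "(\<Sum>s | s permutes {0..<m}. (\<Prod>a<m. A (xs ! s a) a) * detn m (\<lambda>a b. B (xs ! s a) b))
      = (\<Sum>s | s permutes {0..<m}. of_int (sign s) * (\<Prod>a<m. A (xs ! s a) a)) * detn m (\<lambda>i b. B (xs ! i) b)"
    unfolding sum_distrib_right
    by (intro sum.cong refl) (simp add: detn_permute_rows[of _ m "\<lambda>i b. B (xs ! i) b"])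
  also have "(\<Sum>s | s permutes {0..<m}. of_int (sign s) * (\<Prod>a<m. A (xs ! s a) a)) = detn m (\<lambda>i a. A (xs ! i) a)"
    using detn_transpose[of m "\<lambda>i a. A (xs ! i) a"] unfolding detn_def by simp
  finally show ?thesis .
qed

lemma detn_cauchy_binet:
  fixes A B :: "nat \<Rightarrow> nat \<Rightarrow> real"
  assumes "finite J"
  shows "detn m (\<lambda>a b. \<Sum>j\<in>J. A j a * B j b)
    = (\<Sum>xs\<in>{xs. length xs = m \<and> sorted_wrt (<) xs \<and> set xs \<subseteq> J}.
         detn m (\<lambda>i a. A (xs ! i) a) * detn m (\<lambda>i b. B (xs ! i) b))"
proof -
  define L where "L = {xs. length xs = m \<and> sorted_wrt (<) xs \<and> set xs \<subseteq> J}"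
  define P where "P = {p. p permutes {0..<m}}"
  define F where "F f = (\<Prod>a<m. A (f a) a) * detn m (\<lambda>a b. B (f a) b)" for f
  have "detn m (\<lambda>a b. \<Sum>j\<in>J. A j a * B j b) = (\<Sum>f\<in>{..<m} \<rightarrow>\<^sub>E J. F f)"
    unfolding F_def by (rule detn_sum_rows_expand[OF assms])
  also have "\<dots> = (\<Sum>f\<in>{f \<in> {..<m} \<rightarrow>\<^sub>E J. inj_on f {..<m}}. F f)"
  proof (rule sum.mono_neutral_right)
    show "\<forall>f\<in>({..<m} \<rightarrow>\<^sub>E J) - {f \<in> {..<m} \<rightarrow>\<^sub>E J. inj_on f {..<m}}. F f = 0"
    proof
      fix f assume "f \<in> ({..<m} \<rightarrow>\<^sub>E J) - {f \<in> {..<m} \<rightarrow>\<^sub>E J. inj_on f {..<m}}"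
      then obtain a b where "a < m" "b < m" "a \<noteq> b" "f a = f b"
        unfolding inj_on_def by auto
      then have "detn m (\<lambda>a b. B (f a) b) = 0" by (intro detn_identical_rows[of a m b]) auto
      then show "F f = 0" unfolding F_def by simp
    qed
  qed (auto simp: assms finite_PiE)
  also have "\<dots> = (\<Sum>p\<in>L \<times> P. F ((\<lambda>(xs, s). restrict (\<lambda>a. xs ! s a) {..<m}) p))"
    unfolding L_def P_def
    by (rule sum.reindex_bij_betw[symmetric, OF bij_betw_compose_sorted_list_permutes])
  also have "\<dots> = (\<Sum>xs\<in>L. \<Sum>s\<in>P. F (restrict (\<lambda>a. xs ! s a) {..<m}))"
    by (simp add: sum.cartesian_product case_prod_beta')
  also have "\<dots> = (\<Sum>xs\<in>L. detn m (\<lambda>i a. A (xs ! i) a) * detn m (\<lambda>i b. B (xs ! i) b))"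
  proof (rule sum.cong[OF refl])
    fix xs
    have "detn m (\<lambda>a b. B (restrict (\<lambda>a. xs ! s a) {..<m} a) b) = detn m (\<lambda>a b. B (xs ! s a) b)" for s
      by (rule detn_cong) simp
    then show "(\<Sum>s\<in>P. F (restrict (\<lambda>a. xs ! s a) {..<m}))
        = detn m (\<lambda>i a. A (xs ! i) a) * detn m (\<lambda>i b. B (xs ! i) b)"
      unfolding F_def P_def by (simp add: sum_permutes_detn_rows)
  qed
  finally show ?thesis unfolding L_def .
qed

section \<open>Polynomial interpolation and Rolle's theorem\<close>

lemma interpolating_poly_exists:
  fixes x v :: "'a \<Rightarrow> real"
  assumes "finite T" "inj_on x T"
  shows "\<exists>P. degree P \<le> card T - 1 \<and> (\<forall>j\<in>T. poly P (x j) = v j)"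
  using assms
proof (induction T rule: finite_induct)
  case empty
  show ?case by (rule exI[of _ 0]) simp
next
  case (insert a T)
  from insert obtain P where P: "degree P \<le> card T - 1" "\<forall>j\<in>T. poly P (x j) = v j"
    by (auto simp: inj_on_insert)
  define Q where "Q = (\<Prod>j\<in>T. [:- x j, 1:])"
  have poly_Q: "poly Q t = (\<Prod>j\<in>T. t - x j)" for t
    unfolding Q_def by (simp add: poly_prod)
  have "degree Q \<le> card T"
    unfolding Q_def using degree_prod_sum_le[OF insert(1), of "\<lambda>j. [:- x j, 1:]"] by simp
  have "poly Q (x a) \<noteq> 0"
    unfolding poly_Q using insert(1,2,4) by (auto simp: inj_on_def)
  define c where "c = (v a - poly P (x a)) / poly Q (x a)"
  define P' where "P' = P + Polynomial.smult c Q"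
  have "degree (Polynomial.smult c Q) \<le> card T"
    using degree_smult_le \<open>degree Q \<le> card T\<close> by (rule le_trans)
  then have "degree P' \<le> card T"
    unfolding P'_def using P(1) by (intro degree_add_le) auto
  moreover have "poly P' (x j) = v j" if "j \<in> insert a T" for j
  proof (cases "j = a")
    case False
    then have "poly Q (x j) = 0" unfolding poly_Q using insert(1) that by (auto intro: prod_zero)
    then show ?thesis using P(2) that False unfolding P'_def by simp
  qed (use \<open>poly Q (x a) \<noteq> 0\<close> in \<open>simp add: P'_def c_def\<close>)
  ultimately show ?case using insert(1,2) by auto
qed

lemma poly_eq_of_eq_on_nodes:
  fixes x :: "'a \<Rightarrow> real"
  assumes "finite T" "inj_on x T" "degree P < card T" "degree Q < card T"
    and "\<forall>j\<in>T. poly P (x j) = poly Q (x j)"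
  shows "P = Q"
proof (rule ccontr)
  assume "P \<noteq> Q"
  then have "P - Q \<noteq> 0" by simp
  have "x ` T \<subseteq> {t. poly (P - Q) t = 0}" using assms(5) by auto
  then have "card (x ` T) \<le> card {t. poly (P - Q) t = 0}"
    by (rule card_mono[OF poly_roots_finite[OF \<open>P - Q \<noteq> 0\<close>]])
  also have "\<dots> \<le> degree (P - Q)" by (rule card_poly_roots_bound[OF \<open>P - Q \<noteq> 0\<close>])
  also have "\<dots> < card T" using degree_diff_le_max[of P Q] assms(3,4) by linarith
  finally show False using assms(2) by (simp add: card_image)
qed

lemma coeff_interpolants_diff:
  fixes x v :: "'a \<Rightarrow> real"
  assumes Y: "finite Y" "inj_on x Y" "card Y = Suc (Suc m)"
    and P: "degree P \<le> Suc m" "\<forall>j\<in>Y. poly P (x j) = v j"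
    and ab: "a \<in> Y" "b \<in> Y"
    and Qa: "degree Qa \<le> m" "\<forall>j\<in>Y - {a}. poly Qa (x j) = v j"
    and Qb: "degree Qb \<le> m" "\<forall>j\<in>Y - {b}. poly Qb (x j) = v j"
  shows "coeff Qa m - coeff Qb m = coeff P (Suc m) * (x b - x a)"
proof (cases "a = b")
  case True
  have "Qa = Qb"
    using Y Qa Qb True ab by (intro poly_eq_of_eq_on_nodes[of "Y - {a}" x]) (auto intro: inj_on_subset)
  then show ?thesis using True by simp
next
  case False
  then have "x b - x a \<noteq> 0" using Y(2) ab by (auto simp: inj_on_def)
  \<comment> \<open>Neville's combination \<open>W\<close> interpolates \<open>v\<close> on all of \<open>Y\<close>, hence \<open>W = P\<close>.\<close>
  define W where "W = Polynomial.smult (1 / (x b - x a)) ([:- x a, 1:] * Qa - [:- x b, 1:] * Qb)"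
  have deg_lin: "degree ([:- c, 1:] * Q) \<le> Suc m" if "degree Q \<le> m" for c and Q :: "real poly"
    using degree_mult_le[of "[:- c, 1:]" Q] that by simp
  have coeff_lin: "coeff ([:- c, 1:] * Q) (Suc m) = coeff Q m" if "degree Q \<le> m" for c and Q :: "real poly"
  proof -
    have "coeff Q (Suc m) = 0" using that by (simp add: coeff_eq_0)
    then show ?thesis by (simp add: mult_pCons_left coeff_pCons)
  qed
  have "degree W \<le> Suc m"
    unfolding W_def using Qa(1) Qb(1)
    by (intro order_trans[OF degree_smult_le] degree_diff_le deg_lin)
  moreover have "poly W (x j) = v j" if "j \<in> Y" for j
  proof -
    have "poly W (x j) = ((x j - x a) * poly Qa (x j) - (x j - x b) * poly Qb (x j)) / (x b - x a)"
      using \<open>x b - x a \<noteq> 0\<close> unfolding W_def by (simp add: field_simps)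
    also have "\<dots> = v j"
    proof -
      have "j \<noteq> a \<Longrightarrow> poly Qa (x j) = v j" "j \<noteq> b \<Longrightarrow> poly Qb (x j) = v j"
        using Qa(2) Qb(2) that by auto
      then show ?thesis
        using \<open>x b - x a \<noteq> 0\<close> False by (cases "j = a"; cases "j = b") (simp_all add: field_simps)
    qed
    finally show ?thesis .
  qed
  ultimately have "W = P"
    using Y P by (intro poly_eq_of_eq_on_nodes[of Y x]) auto
  moreover have "coeff W (Suc m) = (coeff Qa m - coeff Qb m) / (x b - x a)"
    unfolding W_def coeff_smult coeff_diff coeff_lin[OF Qa(1)] coeff_lin[OF Qb(1)] by simp
  ultimately show ?thesis using \<open>x b - x a \<noteq> 0\<close> by (simp add: field_simps)
qed

lemma poly_eq_sum_coeff:
  assumes "degree (P :: real poly) \<le> r"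
  shows "poly P t = (\<Sum>k\<le>r. coeff P k * t ^ k)"
proof -
  have "poly P t = (\<Sum>k\<le>degree P. coeff P k * t ^ k)" by (simp add: poly_altdef)
  also have "\<dots> = (\<Sum>k\<le>r. coeff P k * t ^ k)"
    by (rule sum.mono_neutral_left) (use assms in \<open>auto simp: coeff_eq_0\<close>)
  finally show ?thesis .
qed

lemma poly_higher_pderiv_eq_coeff:
  assumes "degree (P :: real poly) \<le> r"
  shows "poly ((pderiv ^^ r) P) c = fact r * coeff P r"
proof -
  have "degree ((pderiv ^^ r) P) = 0" using assms by (simp add: degree_higher_pderiv)
  then have "(pderiv ^^ r) P = [:coeff ((pderiv ^^ r) P) 0:]" by (simp add: degree_0_id)
  then have "poly ((pderiv ^^ r) P) c = coeff ((pderiv ^^ r) P) 0"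
    by (metis poly_pCons mult_zero_right poly_0 add_0_right)
  also have "\<dots> = fact r * coeff P r"
    by (simp add: coeff_higher_pderiv pochhammer_fact)
  finally show ?thesis .
qed

lemma rolle_diff_poly:
  assumes ab: "l \<le> a" "a < b" "b \<le> u"
    and der: "\<And>t. t \<in> {l..u} \<Longrightarrow> (f has_real_derivative f' t) (at t within {l..u})"
    and "f a = poly Q a" "f b = poly Q b"
  shows "\<exists>z. a < z \<and> z < b \<and> f' z = poly (pderiv Q) z"
proof -
  define g where "g t = f t - poly Q t" for t
  have dg: "(g has_real_derivative (f' t - poly (pderiv Q) t)) (at t within {l..u})"
    if "t \<in> {l..u}" for t
    unfolding g_def
    by (rule DERIV_diff[OF der[OF that] has_field_derivative_at_within[OF poly_DERIV]])
  then have "continuous_on {l..u} g"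
    using DERIV_continuous continuous_on_eq_continuous_within by blast
  then have cont: "continuous_on {a..b} g" by (rule continuous_on_subset) (use ab in auto)
  have deriv: "(g has_derivative (*) (f' t - poly (pderiv Q) t)) (at t)" if "a < t" "t < b" for t
  proof -
    have "at t within {l..u} = at t" by (rule at_within_Icc_at) (use that ab in auto)
    then show ?thesis using dg[of t] that ab by (simp add: has_field_derivative_def)
  qed
  have "g a = g b" using assms by (simp add: g_def)
  then obtain z where z: "a < z" "z < b" "(*) (f' z - poly (pderiv Q) z) = (\<lambda>v. 0)"
    using Rolle_deriv[OF ab(2) _ cont deriv] by auto
  have "f' z - poly (pderiv Q) z = 0" using fun_cong[OF z(3), of 1] by simp
  then show ?thesis using z by auto
qed

lemma higher_rolle_diff_poly:
  fixes D :: "nat \<Rightarrow> real \<Rightarrow> real" and y :: "nat \<Rightarrow> real"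
  assumes "\<And>i. i < Suc k \<Longrightarrow> y i < y (Suc i)" and "\<And>i. i \<le> Suc k \<Longrightarrow> y i \<in> {l..u}"
    and "\<And>j t. j \<le> k \<Longrightarrow> t \<in> {l..u} \<Longrightarrow> (D j has_real_derivative D (Suc j) t) (at t within {l..u})"
    and "\<And>i. i \<le> Suc k \<Longrightarrow> D 0 (y i) = poly Q (y i)"
  shows "\<exists>c. y 0 < c \<and> c < y (Suc k) \<and> D (Suc k) c = poly ((pderiv ^^ Suc k) Q) c"
  using assms
proof (induction k arbitrary: y D Q)
  case 0
  then show ?case using rolle_diff_poly[of l "y 0" "y 1" u "D 0" "D 1" Q] by auto
next
  case (Suc k)
  have "\<exists>z. y i < z \<and> z < y (Suc i) \<and> D 1 z = poly (pderiv Q) z" if "i \<le> Suc k" for i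
    using Suc.prems that by (intro rolle_diff_poly[of l _ _ u "D 0"]) auto
  then obtain z where z: "\<And>i. i \<le> Suc k \<Longrightarrow> y i < z i \<and> z i < y (Suc i) \<and> D 1 (z i) = poly (pderiv Q) (z i)"
    by metis
  have "\<exists>c. z 0 < c \<and> c < z (Suc k) \<and> D (Suc (Suc k)) c = poly ((pderiv ^^ Suc k) (pderiv Q)) c"
  proof (rule Suc.IH[of z "\<lambda>j. D (Suc j)" "pderiv Q"])
    show "z i < z (Suc i)" if "i < Suc k" for i
      using z[of i] z[of "Suc i"] that by force
    show "z i \<in> {l..u}" if "i \<le> Suc k" for i
      using z[OF that] Suc.prems(2)[of i] Suc.prems(2)[of "Suc i"] that by force
  qed (use Suc.prems z in auto)
  then obtain c where c: "z 0 < c" "c < z (Suc k)" "D (Suc (Suc k)) c = poly ((pderiv ^^ Suc k) (pderiv Q)) c"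
    by blast
  moreover have "(pderiv ^^ Suc k) (pderiv Q) = (pderiv ^^ Suc (Suc k)) Q"
    by (simp only: funpow_Suc_right o_apply)
  moreover have "y 0 < c" "c < y (Suc (Suc k))" using z[of 0] z[of "Suc k"] c by force+
  ultimately show ?case using c by auto
qed

section \<open>The minors \<open>phi\<close> and divided differences\<close>

lemma phi_last_column:
  "phi x r xs v = detn (Suc r) (\<lambda>i k. if k = r then v (xs ! i) else x (xs ! i) ^ k)"
  unfolding phi_def by (rule detn_cong) auto

lemma phi_add_scaled: "phi x r xs (\<lambda>i. a * u i + w i) = a * phi x r xs u + phi x r xs w"
  unfolding phi_last_column
  using detn_linear_column[of r "Suc r" a "\<lambda>i. u (xs ! i)" "\<lambda>i. w (xs ! i)" "\<lambda>i k. x (xs ! i) ^ k"]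
  by simp

lemma phi_zero: "phi x r xs (\<lambda>i. 0) = 0"
  using phi_add_scaled[of x r xs 1 "\<lambda>i. 0" "\<lambda>i. 0"] by simp

lemma phi_linear_combination:
  "finite K \<Longrightarrow> phi x r xs (\<lambda>i. \<Sum>k\<in>K. c k * g k i) = (\<Sum>k\<in>K. c k * phi x r xs (g k))"
proof (induction K rule: finite_induct)
  case (insert a K)
  then show ?case
    using phi_add_scaled[of x r xs "c a" "g a" "\<lambda>i. \<Sum>k\<in>K. c k * g k i"] by simp
qed (simp add: phi_zero)

lemma phi_cong:
  assumes "length xs = Suc r" "\<And>j. j \<in> set xs \<Longrightarrow> u j = w j"
  shows "phi x r xs u = phi x r xs w"
  unfolding phi_def by (rule detn_cong) (use assms in auto)

lemma phi_vpow_less: "k < r \<Longrightarrow> phi x r xs (vpow x k) = 0"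
  unfolding phi_def by (rule detn_identical_columns[of k "Suc r" r]) (auto simp: vpow_def)

lemma phi_vpow: "phi x r xs (vpow x r) = detn (Suc r) (\<lambda>i k. x (xs ! i) ^ k)"
  unfolding phi_def by (rule detn_cong) (auto simp: vpow_def less_Suc_eq)

lemma phi_poly:
  assumes "length xs = Suc r" "degree P \<le> r" "\<And>j. j \<in> set xs \<Longrightarrow> poly P (x j) = v j"
  shows "phi x r xs v = coeff P r * phi x r xs (vpow x r)"
proof -
  have "phi x r xs v = phi x r xs (\<lambda>i. \<Sum>k\<le>r. coeff P k * vpow x k i)"
    by (rule phi_cong) (use assms in \<open>auto simp: poly_eq_sum_coeff vpow_def\<close>)
  also have "\<dots> = (\<Sum>k\<le>r. coeff P k * phi x r xs (vpow x k))"
    by (rule phi_linear_combination) simp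
  also have "\<dots> = coeff P r * phi x r xs (vpow x r) + (\<Sum>k<r. coeff P k * phi x r xs (vpow x k))"
    by (simp add: lessThan_Suc_atMost[symmetric])
  finally show ?thesis by (simp add: phi_vpow_less)
qed

lemma phi_vpow_eq_phi_residual:
  assumes "length xs = Suc r" "set xs \<subseteq> J"
  shows "phi x r xs (vpow x r) = phi x r xs (\<lambda>i. restr J (vpow x r) i - (\<Sum>k<r. \<alpha> k * restr J (vpow x k) i))"
proof -
  have "phi x r xs (\<lambda>i. restr J (vpow x r) i - (\<Sum>k<r. \<alpha> k * restr J (vpow x k) i))
      = - phi x r xs (\<lambda>i. \<Sum>k<r. \<alpha> k * restr J (vpow x k) i) + phi x r xs (restr J (vpow x r))"
    using phi_add_scaled[of x r xs "-1" "\<lambda>i. \<Sum>k<r. \<alpha> k * restr J (vpow x k) i" "restr J (vpow x r)"]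
    by simp
  also have "phi x r xs (\<lambda>i. \<Sum>k<r. \<alpha> k * restr J (vpow x k) i) = (\<Sum>k<r. \<alpha> k * phi x r xs (restr J (vpow x k)))"
    by (rule phi_linear_combination) simp
  also have "\<dots> = 0"
  proof (rule sum.neutral, intro ballI)
    fix k assume "k \<in> {..<r}"
    have "phi x r xs (restr J (vpow x k)) = phi x r xs (vpow x k)"
      by (rule phi_cong[OF assms(1)]) (use assms(2) in \<open>auto simp: restr_def\<close>)
    then show "\<alpha> k * phi x r xs (restr J (vpow x k)) = 0" using \<open>k \<in> {..<r}\<close> by (simp add: phi_vpow_less)
  qed
  also have "phi x r xs (restr J (vpow x r)) = phi x r xs (vpow x r)"
    by (rule phi_cong[OF assms(1)]) (use assms(2) in \<open>auto simp: restr_def\<close>)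
  finally show ?thesis by simp
qed

text \<open>Cauchy--Binet, and orthogonality of \<open>d\<close> kills the last column of the bordered moment matrix.\<close>

lemma sum_phi_mult_phi_eq_moments:
  assumes "finite J" and orth: "\<And>k. k < r \<Longrightarrow> (\<Sum>j\<in>J. d j * x j ^ k) = 0"
  shows "(\<Sum>xs\<in>{xs. length xs = Suc r \<and> sorted_wrt (<) xs \<and> set xs \<subseteq> J}. phi x r xs w * phi x r xs d)
       = (\<Sum>j\<in>J. w j * d j) * detn r (\<lambda>a b. \<Sum>j\<in>J. x j ^ a * x j ^ b)"
proof -
  define A where "A j a = (if a < r then x j ^ a else w j)" for j a
  define B where "B j b = (if b < r then x j ^ b else d j)" for j b
  have "(\<Sum>xs\<in>{xs. length xs = Suc r \<and> sorted_wrt (<) xs \<and> set xs \<subseteq> J}. phi x r xs w * phi x r xs d)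
      = (\<Sum>xs\<in>{xs. length xs = Suc r \<and> sorted_wrt (<) xs \<and> set xs \<subseteq> J}.
           detn (Suc r) (\<lambda>i a. A (xs ! i) a) * detn (Suc r) (\<lambda>i b. B (xs ! i) b))"
    unfolding phi_def A_def B_def ..
  also have "\<dots> = detn (Suc r) (\<lambda>a b. \<Sum>j\<in>J. A j a * B j b)"
    by (rule detn_cauchy_binet[OF \<open>finite J\<close>, symmetric])
  also have "\<dots> = (\<Sum>j\<in>J. A j r * B j r) * detn r (\<lambda>a b. \<Sum>j\<in>J. A j a * B j b)"
    by (rule detn_Suc_last_column) (simp add: A_def B_def orth mult.commute)
  also have "detn r (\<lambda>a b. \<Sum>j\<in>J. A j a * B j b) = detn r (\<lambda>a b. \<Sum>j\<in>J. x j ^ a * x j ^ b)"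
    by (rule detn_cong) (simp add: A_def B_def)
  finally show ?thesis by (simp add: A_def B_def)
qed

lemma Ir_length: "xs \<in> Ir n r \<Longrightarrow> length xs = Suc r"
  and Ir_sorted: "xs \<in> Ir n r \<Longrightarrow> sorted_wrt (<) xs"
  and Ir_subset: "xs \<in> Ir n r \<Longrightarrow> set xs \<subseteq> {1..n}"
  by (simp_all add: Ir_def)

lemma card_set_Ir: "xs \<in> Ir n r \<Longrightarrow> card (set xs) = Suc r"
  by (auto simp: Ir_def strict_sorted_iff distinct_card)

lemma sorted_list_of_set_Ir: "xs \<in> Ir n r \<Longrightarrow> sorted_list_of_set (set xs) = xs"
  by (auto simp: Ir_def strict_sorted_iff sorted_list_of_set.idem_if_sorted_distinct)

lemma sorted_list_of_set_in_Ir: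
  assumes "T \<subseteq> {1..n}" "card T = Suc r"
  shows "sorted_list_of_set T \<in> Ir n r"
  using assms finite_subset[OF assms(1)] by (auto simp: Ir_def strict_sorted_iff)

lemma upt_in_Ir: "i \<in> {1..n - r} \<Longrightarrow> [i..<i + Suc r] \<in> Ir n r"
  unfolding Ir_def by (auto simp del: upt_Suc simp add: sorted_wrt_upt)

lemma Max_minus_Min_remove_endpoint_less:
  fixes Y :: "nat set"
  assumes "finite Y" "Y \<subseteq> {lo..hi}" "t \<in> Y" "lo < t" "t < hi" "c \<in> {lo, hi}"
  shows "Max (Y - {c}) - Min (Y - {c}) < hi - lo"
proof -
  have fin: "finite (Y - {c})" and t: "t \<in> Y - {c}" using assms by auto
  then have "Max (Y - {c}) \<in> Y - {c}" "Min (Y - {c}) \<in> Y - {c}" "Min (Y - {c}) \<le> Max (Y - {c})"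
    using Max_in[OF fin] Min_in[OF fin] order_trans[OF Min_le[OF fin] Max_ge[OF fin]] by blast+
  moreover have "Max (Y - {c}) \<in> {lo..hi}" "Min (Y - {c}) \<in> {lo..hi}"
    using calculation(1,2) assms(2) by blast+
  ultimately show ?thesis using assms(6) by auto
qed

definition divdiff :: "(nat \<Rightarrow> real) \<Rightarrow> nat \<Rightarrow> nat set \<Rightarrow> (nat \<Rightarrow> real) \<Rightarrow> real" where
  "divdiff x r T v = phi x r (sorted_list_of_set T) v / phi x r (sorted_list_of_set T) (vpow x r)"

section \<open>Orthogonal projection onto \<open>X_J\<close>\<close>

lemma inner_n_eq_sum_support:
  assumes "J \<subseteq> {1..n}" "\<And>i. i \<notin> J \<Longrightarrow> a i = 0"
  shows "inner_n n a b = (\<Sum>j\<in>J. a j * b j)"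
  unfolding inner_n_def by (rule sum.mono_neutral_right) (use assms in auto)

lemma proj_n_eqI:
  assumes support: "\<And>v i. v \<in> S \<Longrightarrow> i \<notin> {1..n} \<Longrightarrow> v i = 0"
    and diff: "\<And>v w. v \<in> S \<Longrightarrow> w \<in> S \<Longrightarrow> (\<lambda>i. v i - w i) \<in> S"
    and "p \<in> S" and orth: "\<And>v. v \<in> S \<Longrightarrow> inner_n n (\<lambda>i. u i - p i) v = 0"
  shows "proj_n n S u = p"
  unfolding proj_n_def
proof (rule the_equality)
  show "p \<in> S \<and> (\<forall>v\<in>S. inner_n n (\<lambda>i. u i - p i) v = 0)" using \<open>p \<in> S\<close> orth by blast
  fix q assume q: "q \<in> S \<and> (\<forall>v\<in>S. inner_n n (\<lambda>i. u i - q i) v = 0)"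
  define z where "z = (\<lambda>i. p i - q i)"
  have "z \<in> S" unfolding z_def using diff \<open>p \<in> S\<close> q by blast
  have "inner_n n z z = inner_n n (\<lambda>i. u i - q i) z - inner_n n (\<lambda>i. u i - p i) z"
    unfolding inner_n_def z_def by (simp add: sum_subtractf[symmetric] algebra_simps)
  also have "\<dots> = 0" using q orth \<open>z \<in> S\<close> by simp
  finally have "(\<Sum>i=1..n. z i * z i) = 0" unfolding inner_n_def .
  then have "z i = 0" if "i \<in> {1..n}" for i
    using that by (subst (asm) sum_nonneg_eq_0_iff) auto
  moreover have "z i = 0" if "i \<notin> {1..n}" for i using support[OF \<open>z \<in> S\<close> that] .
  ultimately show "q = p" unfolding z_def by (metis eq_iff_diff_eq_0 ext)
qed

lemma XJ_vanishes: "v \<in> XJ x r J \<Longrightarrow> i \<notin> J \<Longrightarrow> v i = 0"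
  by (auto simp: XJ_def restr_def)

lemma XJ_diff:
  assumes "v \<in> XJ x r J" "w \<in> XJ x r J"
  shows "(\<lambda>i. v i - w i) \<in> XJ x r J"
proof -
  obtain a b where "v = (\<lambda>i. \<Sum>k<r. a k * restr J (vpow x k) i)" "w = (\<lambda>i. \<Sum>k<r. b k * restr J (vpow x k) i)"
    using assms by (auto simp: XJ_def)
  then show ?thesis
    unfolding XJ_def by (auto intro!: exI[of _ "\<lambda>k. a k - b k"] simp: sum_subtractf algebra_simps)
qed

lemma inner_n_eq_0_XJ:
  assumes "J \<subseteq> {1..n}" "\<And>i. i \<notin> J \<Longrightarrow> d i = 0" "\<And>k. k < r \<Longrightarrow> (\<Sum>j\<in>J. d j * x j ^ k) = 0"
    and "v \<in> XJ x r J"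
  shows "inner_n n d v = 0"
proof -
  obtain a where a: "v = (\<lambda>i. \<Sum>k<r. a k * restr J (vpow x k) i)" using assms(4) by (auto simp: XJ_def)
  have "inner_n n d v = (\<Sum>j\<in>J. \<Sum>k<r. a k * (d j * x j ^ k))"
    by (simp add: inner_n_eq_sum_support[OF assms(1,2)] a restr_def vpow_def sum_distrib_left
        algebra_simps)
  also have "\<dots> = (\<Sum>k<r. a k * (\<Sum>j\<in>J. d j * x j ^ k))"
    by (simp add: sum.swap[of _ J] sum_distrib_left)
  also have "\<dots> = 0" by (simp add: assms(3))
  finally show ?thesis .
qed

lemma gram_restr_vpow:
  assumes "J \<subseteq> {1..n}"
  shows "gram n r (\<lambda>k. restr J (vpow x k)) = detn r (\<lambda>a b. \<Sum>j\<in>J. x j ^ a * x j ^ b)"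
  unfolding gram_def
proof (rule detn_cong)
  fix a b
  have "inner_n n (restr J (vpow x a)) (restr J (vpow x b)) = (\<Sum>j\<in>J. restr J (vpow x a) j * restr J (vpow x b) j)"
    by (rule inner_n_eq_sum_support[OF assms]) (simp add: restr_def)
  also have "\<dots> = (\<Sum>j\<in>J. x j ^ a * x j ^ b)" by (rule sum.cong) (auto simp: restr_def vpow_def)
  finally show "inner_n n (restr J (vpow x a)) (restr J (vpow x b)) = (\<Sum>j\<in>J. x j ^ a * x j ^ b)" .
qed

section \<open>Strictly increasing nodes\<close>

locale increasing_nodes =
  fixes n :: nat and x :: "nat \<Rightarrow> real"
  assumes x_less: "\<And>i j. 1 \<le> i \<Longrightarrow> i < j \<Longrightarrow> j \<le> n \<Longrightarrow> x i < x j"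
begin

lemma inj_on_nodes: "T \<subseteq> {1..n} \<Longrightarrow> inj_on x T"
  by (rule inj_onI) (metis atLeastAtMost_iff subsetD linorder_neqE_nat x_less order_less_irrefl)

lemma node_between_ends: "j \<in> {1..n} \<Longrightarrow> x j \<in> {x 1..x n}"
  using x_less[of 1 j] x_less[of j n] by (cases "j = 1"; cases "j = n") auto

lemma nodes_less_Ir:
  assumes "xs \<in> Ir n r" "i < j" "j \<le> r"
  shows "x (xs ! i) < x (xs ! j)"
proof -
  have "xs ! i < xs ! j" using sorted_wrt_nth_less[OF Ir_sorted] Ir_length assms by simp
  moreover have "xs ! i \<in> {1..n}" "xs ! j \<in> {1..n}"
    using Ir_subset[OF assms(1)] Ir_length[OF assms(1)] assms(2,3) nth_mem[of _ xs] by fastforce+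
  ultimately show ?thesis using x_less by auto
qed

lemma phi_vpow_pos: "xs \<in> Ir n r \<Longrightarrow> 0 < phi x r xs (vpow x r)"
  unfolding phi_vpow by (rule detn_vandermonde_pos) (simp add: nodes_less_Ir)

lemma divdiff_eq_coeff:
  assumes "T \<subseteq> {1..n}" "card T = Suc r" "degree P \<le> r" "\<And>j. j \<in> T \<Longrightarrow> poly P (x j) = v j"
  shows "divdiff x r T v = coeff P r"
proof -
  have T: "sorted_list_of_set T \<in> Ir n r" "set (sorted_list_of_set T) = T"
    using sorted_list_of_set_in_Ir[OF assms(1,2)] finite_subset[OF assms(1)] by auto
  have "phi x r (sorted_list_of_set T) v = coeff P r * phi x r (sorted_list_of_set T) (vpow x r)"
    by (rule phi_poly) (use Ir_length[OF T(1)] assms T(2) in auto)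
  then show ?thesis unfolding divdiff_def using phi_vpow_pos[OF T(1)] by simp
qed

lemma divdiff_recurrence:
  assumes Y: "Y \<subseteq> {1..n}" "card Y = Suc (Suc r)"
  obtains K where "\<And>a b. a \<in> Y \<Longrightarrow> b \<in> Y \<Longrightarrow>
    divdiff x r (Y - {a}) v - divdiff x r (Y - {b}) v = K * (x b - x a)"
proof -
  have fin: "finite Y" using Y(1) finite_subset by blast
  have inj: "inj_on x Z" if "Z \<subseteq> Y" for Z using inj_on_nodes Y(1) that by blast
  obtain P where P: "degree P \<le> Suc r" "\<forall>j\<in>Y. poly P (x j) = v j"
    using interpolating_poly_exists[OF fin inj[of Y]] Y(2) by auto
  have interp: "\<exists>Q. degree Q \<le> r \<and> (\<forall>j\<in>Y - {c}. poly Q (x j) = v j) \<and> divdiff x r (Y - {c}) v = coeff Q r"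
    if "c \<in> Y" for c
  proof -
    have card: "card (Y - {c}) = Suc r" using Y(2) fin that by simp
    obtain Q where Q: "degree Q \<le> r" "\<forall>j\<in>Y - {c}. poly Q (x j) = v j"
      using interpolating_poly_exists[of "Y - {c}" x v] fin inj[of "Y - {c}"] card by auto
    moreover have "divdiff x r (Y - {c}) v = coeff Q r"
      using Y(1) card Q by (intro divdiff_eq_coeff) auto
    ultimately show ?thesis by blast
  qed
  show ?thesis
  proof (rule that[of "coeff P (Suc r)"])
    fix a b assume "a \<in> Y" "b \<in> Y"
    with interp obtain Qa Qb where "degree Qa \<le> r" "\<forall>j\<in>Y - {a}. poly Qa (x j) = v j"
      "divdiff x r (Y - {a}) v = coeff Qa r"
      "degree Qb \<le> r" "\<forall>j\<in>Y - {b}. poly Qb (x j) = v j" "divdiff x r (Y - {b}) v = coeff Qb r"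
      by meson
    then show "divdiff x r (Y - {a}) v - divdiff x r (Y - {b}) v = coeff P (Suc r) * (x b - x a)"
      using coeff_interpolants_diff[OF fin inj[of Y] Y(2) P \<open>a \<in> Y\<close> \<open>b \<in> Y\<close>] by simp
  qed
qed

text \<open>Removing an interior node gives a convex combination of removing either extreme node.\<close>

lemma divdiff_ge_min:
  assumes Y: "Y \<subseteq> {1..n}" "card Y = Suc (Suc r)"
    and "lo \<in> Y" "t \<in> Y" "hi \<in> Y" "lo < t" "t < hi"
  shows "min (divdiff x r (Y - {lo}) v) (divdiff x r (Y - {hi}) v) \<le> divdiff x r (Y - {t}) v"
proof -
  obtain K where K: "\<And>a b. a \<in> Y \<Longrightarrow> b \<in> Y \<Longrightarrow>
      divdiff x r (Y - {a}) v - divdiff x r (Y - {b}) v = K * (x b - x a)"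
    using divdiff_recurrence[OF Y] by blast
  have "x lo < x t" "x t < x hi" using assms x_less by (meson atLeastAtMost_iff subsetD)+
  show ?thesis
  proof (cases "0 \<le> K")
    case True
    then have "0 \<le> K * (x hi - x t)" using \<open>x t < x hi\<close> by simp
    then show ?thesis using K[of t hi] assms by simp
  next
    case False
    then have "K * (x t - x lo) \<le> 0" using \<open>x lo < x t\<close> by (simp add: mult_nonpos_nonneg)
    then show ?thesis using K[of lo t] assms by simp
  qed
qed

lemma divdiff_interval_nonneg:
  assumes "i \<in> {1..n - r}" "0 \<le> phi_cons x r i w"
  shows "0 \<le> divdiff x r {i..i + r} w"
proof -
  have "sorted_list_of_set {i..i + r} = [i..<i + Suc r]"
    by (simp add: atLeastLessThanSuc_atLeastAtMost[symmetric] del: upt_Suc)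
  then show ?thesis
    using assms phi_vpow_pos[OF upt_in_Ir[OF assms(1)]] by (simp add: divdiff_def phi_cons_def)
qed

lemma divdiff_nonneg_of_consecutive:
  assumes consecutive: "\<And>i. i \<in> {1..n - r} \<Longrightarrow> 0 \<le> phi_cons x r i w"
  shows "T \<subseteq> {1..n} \<Longrightarrow> card T = Suc r \<Longrightarrow> 0 \<le> divdiff x r T w"
proof (induction "Max T - Min T" arbitrary: T rule: less_induct)
  case less
  have fin: "finite T" and "T \<noteq> {}" using less.prems finite_subset by auto
  define lo hi where "lo = Min T" and "hi = Max T"
  have "lo \<in> T" "hi \<in> T" "T \<subseteq> {lo..hi}" using fin \<open>T \<noteq> {}\<close> by (auto simp: lo_def hi_def)
  have "1 \<le> lo" "hi \<le> n" using \<open>lo \<in> T\<close> \<open>hi \<in> T\<close> less.prems(1) by auto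
  show ?case
  proof (cases "T = {lo..hi}")
    case True
    then have "hi = lo + r" using less.prems(2) \<open>lo \<in> T\<close> by auto
    then have "lo \<in> {1..n - r}" using \<open>1 \<le> lo\<close> \<open>hi \<le> n\<close> by auto
    then show ?thesis using True \<open>hi = lo + r\<close> by (simp add: divdiff_interval_nonneg consecutive)
  next
    case False
    \<comment> \<open>A gap \<open>t\<close> between \<open>lo\<close> and \<open>hi\<close>: drop either extreme node of \<open>insert t T\<close> and recurse.\<close>
    then obtain t where t: "t \<in> {lo..hi}" "t \<notin> T" using \<open>T \<subseteq> {lo..hi}\<close> by blast
    then have "lo < t" "t < hi" using \<open>lo \<in> T\<close> \<open>hi \<in> T\<close> by (auto simp: order_le_less)
    define Y where "Y = insert t T"
    have Y: "Y \<subseteq> {1..n}" "card Y = Suc (Suc r)" "Y \<subseteq> {lo..hi}" "Y - {t} = T"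
      "lo \<in> Y" "t \<in> Y" "hi \<in> Y"
      using less.prems t fin \<open>1 \<le> lo\<close> \<open>hi \<le> n\<close> \<open>T \<subseteq> {lo..hi}\<close> \<open>lo \<in> T\<close> \<open>hi \<in> T\<close>
      by (simp_all add: Y_def subset_iff) auto
    have ends: "0 \<le> divdiff x r (Y - {c}) w" if "c \<in> {lo, hi}" for c
    proof (rule less.hyps)
      show "Max (Y - {c}) - Min (Y - {c}) < Max T - Min T"
        using Max_minus_Min_remove_endpoint_less[OF finite_subset[OF Y(1)] Y(3,6) \<open>lo < t\<close> \<open>t < hi\<close> that]
        by (simp add: lo_def hi_def)
      show "Y - {c} \<subseteq> {1..n}" "card (Y - {c}) = Suc r"
        using Y(1,2,5,7) that finite_subset[OF Y(1)] by auto
    qed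
    show ?thesis
      using divdiff_ge_min[OF Y(1,2,5,6,7) \<open>lo < t\<close> \<open>t < hi\<close>, of w] Y(4) ends[of lo] ends[of hi]
      by (auto simp: min_le_iff_disj)
  qed
qed

lemma Ctilde_eq_Ccons: "Ctilde n x r R = Ccons n x r R"
proof
  show "Ctilde n x r R \<subseteq> Ccons n x r R"
    unfolding Ctilde_def Ccons_def phi_cons_def using upt_in_Ir by blast
  show "Ccons n x r R \<subseteq> Ctilde n x r R"
  proof
    fix f assume f: "f \<in> Ccons n x r R"
    have "0 \<le> phi x r xs (star R x f)" if xs: "xs \<in> Ir n r" for xs
    proof -
      have "0 \<le> divdiff x r (set xs) (star R x f)"
        using f Ir_subset[OF xs] card_set_Ir[OF xs]
        by (intro divdiff_nonneg_of_consecutive) (auto simp: Ccons_def)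
      then show ?thesis
        using phi_vpow_pos[OF xs] by (simp add: divdiff_def sorted_list_of_set_Ir[OF xs] zero_le_divide_iff)
    qed
    then show "f \<in> Ctilde n x r R" using f unfolding Ctilde_def Ccons_def by auto
  qed
qed

lemma phi_mean_value:
  assumes xs: "xs \<in> Ir n r" and "1 \<le> r"
    and nodes: "\<And>j. j \<in> set xs \<Longrightarrow> x j \<in> {l..u}"
    and der: "\<forall>k<r. \<forall>t\<in>{l..u}. (D k has_real_derivative D (Suc k) t) (at t within {l..u})"
    and v: "\<And>j. j \<in> set xs \<Longrightarrow> v j = D 0 (x j)"
  shows "\<exists>c. x (xs ! 0) < c \<and> c < x (xs ! r) \<and> phi x r xs v = D r c / fact r * phi x r xs (vpow x r)"
proof -
  obtain k where k: "r = Suc k" using \<open>1 \<le> r\<close> by (cases r) auto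
  have inj: "inj_on x (set xs)" using inj_on_nodes[OF Ir_subset[OF xs]] .
  obtain P where "degree P \<le> card (set xs) - 1" and P: "\<forall>j\<in>set xs. poly P (x j) = D 0 (x j)"
    using interpolating_poly_exists[OF finite_set inj, of "\<lambda>j. D 0 (x j)"] by blast
  then have deg: "degree P \<le> r" using card_set_Ir[OF xs] by simp
  have "phi x r xs v = coeff P r * phi x r xs (vpow x r)"
    using Ir_length[OF xs] deg P v by (intro phi_poly) auto
  moreover obtain c where c: "x (xs ! 0) < c" "c < x (xs ! r)" "D r c = poly ((pderiv ^^ r) P) c"
  proof -
    have "\<exists>c. x (xs ! 0) < c \<and> c < x (xs ! Suc k) \<and> D (Suc k) c = poly ((pderiv ^^ Suc k) P) c"
    proof (rule higher_rolle_diff_poly[where y = "\<lambda>i. x (xs ! i)" and l = l and u = u])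
      show "x (xs ! i) < x (xs ! Suc i)" if "i < Suc k" for i
        using nodes_less_Ir[OF xs] that k by simp
      show "x (xs ! i) \<in> {l..u}" "D 0 (x (xs ! i)) = poly P (x (xs ! i))" if "i \<le> Suc k" for i
        using nodes P Ir_length[OF xs] that k by simp_all
      show "(D j has_real_derivative D (Suc j) t) (at t within {l..u})" if "j \<le> k" "t \<in> {l..u}" for j t
        using der that k by simp
    qed
    then show ?thesis using that k by blast
  qed
  moreover have "D r c / fact r = coeff P r"
    using c(3) poly_higher_pderiv_eq_coeff[OF deg, of c] by simp
  ultimately show ?thesis by (intro exI[of _ c]) simp
qed

lemma detn_moments_pos:
  assumes J: "J \<subseteq> {1..n}" "r \<le> card J"
  shows "0 < detn r (\<lambda>a b. \<Sum>j\<in>J. x j ^ a * x j ^ b)"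
proof -
  have "finite J" using J(1) finite_subset by blast
  define L where "L = {xs. length xs = r \<and> sorted_wrt (<) xs \<and> set xs \<subseteq> J}"
  have "finite L"
    by (rule finite_subset[OF _ finite_lists_length_eq[OF \<open>finite J\<close>, of r]]) (auto simp: L_def)
  define xs0 where "xs0 = take r (sorted_list_of_set J)"
  have "xs0 \<in> L"
    using J(2) set_take_subset[of r "sorted_list_of_set J"] \<open>finite J\<close>
    by (auto simp: L_def xs0_def strict_sorted_iff intro: sorted_wrt_take)
  have "0 < detn r (\<lambda>i a. x (xs0 ! i) ^ a)"
  proof (rule detn_vandermonde_pos)
    fix i j assume "i < j" "j < r"
    then have "xs0 ! i < xs0 ! j" "xs0 ! i \<in> J" "xs0 ! j \<in> J"
      using \<open>xs0 \<in> L\<close> sorted_wrt_nth_less[of "(<)" xs0 i j] nth_mem[of _ xs0] by (auto simp: L_def)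
    then show "x (xs0 ! i) < x (xs0 ! j)" using J(1) x_less by (meson atLeastAtMost_iff subsetD)
  qed
  then have "0 < detn r (\<lambda>i a. x (xs0 ! i) ^ a) * detn r (\<lambda>i b. x (xs0 ! i) ^ b)" by simp
  also have "\<dots> \<le> (\<Sum>xs\<in>L. detn r (\<lambda>i a. x (xs ! i) ^ a) * detn r (\<lambda>i b. x (xs ! i) ^ b))"
    by (rule member_le_sum[OF \<open>xs0 \<in> L\<close> _ \<open>finite L\<close>]) simp
  also have "\<dots> = detn r (\<lambda>a b. \<Sum>j\<in>J. x j ^ a * x j ^ b)"
    unfolding L_def by (rule detn_cauchy_binet[OF \<open>finite J\<close>, symmetric])
  finally show ?thesis .
qed

lemma residJ_decomposition:
  assumes J: "J \<subseteq> {1..n}" "r \<le> card J"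
  obtains d where "residJ n x r R J = star R x d" "\<And>i. i \<notin> J \<Longrightarrow> d i = 0"
    "\<And>k. k < r \<Longrightarrow> (\<Sum>j\<in>J. d j * x j ^ k) = 0"
    "\<And>xs. length xs = Suc r \<Longrightarrow> set xs \<subseteq> J \<Longrightarrow> phi x r xs (vpow x r) = phi x r xs d"
proof -
  define G where "G a b = (\<Sum>j\<in>J. x j ^ a * x j ^ b)" for a b
  have "detn r G \<noteq> 0" using detn_moments_pos[OF J] by (simp add: G_def[abs_def])
  then obtain \<alpha> where normal: "\<And>a. a < r \<Longrightarrow> (\<Sum>c<r. G a c * \<alpha> c) = (\<Sum>j\<in>J. x j ^ r * x j ^ a)"
    using detn_linear_system_solvable[where b = "\<lambda>a. \<Sum>j\<in>J. x j ^ r * x j ^ a"] by blast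
  define p where "p = (\<lambda>i. \<Sum>k<r. \<alpha> k * restr J (vpow x k) i)"
  define d where "d = (\<lambda>i. restr J (vpow x r) i - p i)"
  have d_on_J: "d j = x j ^ r - (\<Sum>c<r. \<alpha> c * x j ^ c)" if "j \<in> J" for j
    using that by (simp add: d_def p_def restr_def vpow_def)
  have "p \<in> XJ x r J"
    unfolding XJ_def p_def by blast
  have d_off_J: "d i = 0" if "i \<notin> J" for i
    using that XJ_vanishes[OF \<open>p \<in> XJ x r J\<close>] by (simp add: d_def restr_def)
  have orth: "(\<Sum>j\<in>J. d j * x j ^ k) = 0" if "k < r" for k
  proof -
    have "(\<Sum>j\<in>J. d j * x j ^ k) = (\<Sum>j\<in>J. x j ^ r * x j ^ k) - (\<Sum>c<r. G k c * \<alpha> c)"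
      by (simp add: d_on_J G_def algebra_simps sum_subtractf sum_distrib_left sum_distrib_right
          sum.swap[of _ J] cong: sum.cong)
    then show ?thesis using normal[OF that] by (simp add: mult.commute)
  qed
  have "proj_n n (XJ x r J) (restr J (vpow x r)) = p"
  proof (rule proj_n_eqI)
    show "v i = 0" if "v \<in> XJ x r J" "i \<notin> {1..n}" for v i
      using XJ_vanishes[OF that(1)] that(2) J(1) by blast
    show "inner_n n (\<lambda>i. restr J (vpow x r) i - p i) v = 0" if "v \<in> XJ x r J" for v
      using inner_n_eq_0_XJ[OF J(1) d_off_J orth that] by (simp add: d_def)
  qed (use \<open>p \<in> XJ x r J\<close> XJ_diff in auto)
  then have "residJ n x r R J = star R x d" by (simp add: residJ_def d_def)
  moreover have "phi x r xs (vpow x r) = phi x r xs d" if "length xs = Suc r" "set xs \<subseteq> J" for xs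
    unfolding d_def p_def using that by (rule phi_vpow_eq_phi_residual)
  ultimately show ?thesis using that d_off_J orth by blast
qed

lemma inner_tJ_eq_sum_phi:
  assumes J: "J \<subseteq> {1..n}" "Suc r \<le> card J"
  shows "- inner_n n f (tJ n x r R J)
    = (1 / NJ n x r R J) *
      (\<Sum>xs \<in> {xs \<in> Ir n r. set xs \<subseteq> J}. phi x r xs (star R x f) * phi x r xs (vpow x r))"
proof -
  obtain d where d: "residJ n x r R J = star R x d" "\<And>i. i \<notin> J \<Longrightarrow> d i = 0"
    "\<And>k. k < r \<Longrightarrow> (\<Sum>j\<in>J. d j * x j ^ k) = 0"
    "\<And>xs. length xs = Suc r \<Longrightarrow> set xs \<subseteq> J \<Longrightarrow> phi x r xs (vpow x r) = phi x r xs d"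
    using residJ_decomposition[OF J(1) Suc_leD[OF J(2)]] by blast
  define G where "G = detn r (\<lambda>a b. \<Sum>j\<in>J. x j ^ a * x j ^ b)"
  define S where "S = (\<Sum>j\<in>J. star R x f j * d j)"
  have "0 < G" unfolding G_def using detn_moments_pos J by simp
  have "- inner_n n f (tJ n x r R J) = (\<Sum>i=1..n. star R x d i * f i) / gammaJ n x r R J"
    unfolding tJ_def inner_n_def d(1)
    by (simp add: sum_divide_distrib sum_negf[symmetric] algebra_simps)
  also have "(\<Sum>i=1..n. star R x d i * f i) = S"
    using inner_n_eq_sum_support[OF J(1), of "star R x d" f] d(2)
    by (simp add: inner_n_def S_def star_def algebra_simps)
  finally have lhs: "- inner_n n f (tJ n x r R J) = S / gammaJ n x r R J" .
  have "{xs \<in> Ir n r. set xs \<subseteq> J} = {xs. length xs = Suc r \<and> sorted_wrt (<) xs \<and> set xs \<subseteq> J}"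
    using J(1) by (auto simp: Ir_def)
  then have "(\<Sum>xs \<in> {xs \<in> Ir n r. set xs \<subseteq> J}. phi x r xs (star R x f) * phi x r xs (vpow x r)) = S * G"
    using sum_phi_mult_phi_eq_moments[OF finite_subset[OF J(1)] d(3), where w = "star R x f"] d(4)
    by (simp add: S_def G_def)
  moreover have "NJ n x r R J = G * gammaJ n x r R J"
    by (simp add: NJ_def gram_restr_vpow[OF J(1)] G_def)
  ultimately show ?thesis
    using lhs \<open>0 < G\<close> by (cases "gammaJ n x r R J = 0") (simp_all add: field_simps)
qed

end

theorem lemma2:
  fixes n r :: nat and x :: "nat \<Rightarrow> real" and R :: "real \<Rightarrow> real"
  assumes x0: "0 \<le> x 1" and x1: "x n \<le> 1"
    and xinc: "\<And>i j. 1 \<le> i \<Longrightarrow> i < j \<Longrightarrow> j \<le> n \<Longrightarrow> x i < x j"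
    and r: "1 \<le> r" "r \<le> n - 1"
    and Rsmooth: "smooth01 R"
    and Rnz: "\<And>t. t \<in> {0..1} \<Longrightarrow> R t \<noteq> 0"
  shows
    "Ctilde n x r R = Ccons n x r R
     \<and> (\<forall>F D f. D 0 = (\<lambda>t. R t * F t)
          \<longrightarrow> (\<forall>k<r. \<forall>t\<in>{0..1}. (D k has_real_derivative D (Suc k) t) (at t within {0..1}))
          \<longrightarrow> f = (\<lambda>i. if i \<in> {1..n} then F (x i) else 0)
          \<longrightarrow> (\<forall>is \<in> Ir n r. \<exists>c. x (is ! 0) < c \<and> c < x (is ! r) \<and>
                 phi x r is (star R x f) = D r c / fact r * phi x r is (vpow x r)))
     \<and> (\<forall>J f. J \<subseteq> {1..n} \<longrightarrow> card J \<ge> Suc r \<longrightarrow> f \<in> vecs n \<longrightarrow>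
          - inner_n n f (tJ n x r R J)
          = (1 / NJ n x r R J) *
            (\<Sum>is \<in> {is \<in> Ir n r. set is \<subseteq> J}. phi x r is (star R x f) * phi x r is (vpow x r)))"
proof -
  interpret increasing_nodes n x by unfold_locales (rule xinc)
  show ?thesis
  proof (intro conjI allI impI ballI)
    show "Ctilde n x r R = Ccons n x r R" by (rule Ctilde_eq_Ccons)
  next
    fix F D f xs
    assume D0: "D 0 = (\<lambda>t. R t * F t)"
      and der: "\<forall>k<r. \<forall>t\<in>{0..1}. (D k has_real_derivative D (Suc k) t) (at t within {0..1})"
      and f: "f = (\<lambda>i. if i \<in> {1..n} then F (x i) else 0)" and xs: "xs \<in> Ir n r"
    have "j \<in> {1..n}" if "j \<in> set xs" for j using Ir_subset[OF xs] that by blast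
    then have "x j \<in> {0..1}" and "star R x f j = D 0 (x j)" if "j \<in> set xs" for j
      using that node_between_ends x0 x1 by (force simp: star_def f D0)+
    then show "\<exists>c. x (xs ! 0) < c \<and> c < x (xs ! r) \<and>
        phi x r xs (star R x f) = D r c / fact r * phi x r xs (vpow x r)"
      using phi_mean_value[OF xs r(1) _ der] by blast
  qed (rule inner_tJ_eq_sum_phi)
qed

end
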